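(* For every two-qubit density matrix $\sigma$ there exists a single-qubit unitary $U$ such that $$\bar F_{\mathrm{dummy}}=\bar F_{\mathrm{trap}}=F_{\mathrm{tel}}(\sigma),$$ where $\bar F_{\mathrm{dummy}}=\tfrac12\big(\langle 0|\Lambda_{\sigma,U}(|0\rangle\langle0|)|0\rangle+\langle 1|\Lambda_{\sigma,U}(|1\rangle\langle1|)|1\rangle\big)$, $\bar F_{\mathrm{trap}}=\tfrac18\sum_{\theta\in\Theta}\langle+_\theta|\Lambda_{\sigma,U}(|+_\theta\rangle\langle+_\theta|)|+_\theta\rangle$, and $F_{\mathrm{tel}}(\sigma)=\int\langle\psi|\Lambda_\sigma(|\psi\rangle\langle\psi|)|\psi\rangle\,d\psi$ with the integral over the Haar (uniform) measure on single-qubit pure states.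
   Context: $\Theta=\{i\pi/4\}_{0\le i\le7}$ and $|\pm_\theta\rangle=\frac1{\sqrt2}(|0\rangle\pm e^{i\theta}|1\rangle)$. Let $|\Phi^+\rangle=\frac1{\sqrt2}(|00\rangle+|11\rangle)$ and $|\Phi_{ij}\rangle=(X^iZ^j\otimes\mathbf 1)|\Phi^+\rangle$ for $i,j\in\{0,1\}$. For a two-qubit state $\sigma$ on registers $S$ (sender) and $R$ (receiver), the teleportation channel is $\Lambda_\sigma(\rho)=\sum_{i,j\in\{0,1\}}X^iZ^j\,\langle\Phi_{ij}|_{IS}(\rho_I\otimes\sigma_{SR})|\Phi_{ij}\rangle_{IS}\,(X^iZ^j)^\dagger$. For a single-qubit unitary $U$, the rotated teleportation channel is $\Lambda_{\sigma,U}(\rho)=U^\dagger\Lambda_\sigma(U\rho U^\dagger)U$. *)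

theory Defs
  imports "HOL-Analysis.Analysis"
begin

text \<open>Matrices are represented as functions nat => nat => complex, only the
entries with indices below the dimension being relevant.  Single-qubit
operators have dimension 2 (basis |0>, |1>); two-qubit operators on S (x) R
have dimension 4 with the basis |s r> encoded as index 2*s + r.\<close>

type_synonym cmat = "nat \<Rightarrow> nat \<Rightarrow> complex"
type_synonym cvec = "nat \<Rightarrow> complex"

definition mmul :: "nat \<Rightarrow> cmat \<Rightarrow> cmat \<Rightarrow> cmat" where
  "mmul n A B = (\<lambda>i j. \<Sum>k<n. A i k * B k j)"

definition adj :: "cmat \<Rightarrow> cmat" where
  "adj A = (\<lambda>i j. cnj (A j i))"

definition id_mat :: cmat where
  "id_mat = (\<lambda>i j. if i = j then 1 else 0)"

definition mat_eq :: "nat \<Rightarrow> cmat \<Rightarrow> cmat \<Rightarrow> bool" where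
  "mat_eq n A B \<longleftrightarrow> (\<forall>i<n. \<forall>j<n. A i j = B i j)"

definition unitary :: "nat \<Rightarrow> cmat \<Rightarrow> bool" where
  "unitary n U \<longleftrightarrow> mat_eq n (mmul n (adj U) U) id_mat \<and> mat_eq n (mmul n U (adj U)) id_mat"

definition density :: "nat \<Rightarrow> cmat \<Rightarrow> bool" where
  "density n \<sigma> \<longleftrightarrow>
     (\<forall>i<n. \<forall>j<n. \<sigma> i j = cnj (\<sigma> j i)) \<and>
     (\<forall>v::cvec. 0 \<le> Re (\<Sum>i<n. \<Sum>j<n. cnj (v i) * \<sigma> i j * v j)) \<and>
     (\<Sum>i<n. \<sigma> i i) = 1"

definition pauliX :: cmat where
  "pauliX = (\<lambda>a b. if a < 2 \<and> b < 2 \<and> a \<noteq> b then 1 else 0)"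

definition pauliZ :: cmat where
  "pauliZ = (\<lambda>a b. if a = b \<and> a = 0 then 1 else if a = b \<and> a = 1 then -1 else 0)"

definition pauliXZ :: "nat \<Rightarrow> nat \<Rightarrow> cmat" where
  "pauliXZ i j = mmul 2 (if i = 1 then pauliX else id_mat) (if j = 1 then pauliZ else id_mat)"

text \<open>Bell state |Phi_ij> = (X^i Z^j (x) 1)|Phi+> on registers I S, as amplitude
function of (a, s) with a the I-index and s the S-index.\<close>
definition bell :: "nat \<Rightarrow> nat \<Rightarrow> nat \<Rightarrow> nat \<Rightarrow> complex" where
  "bell i j a s = (\<Sum>b<2. pauliXZ i j a b * (if b = s then 1 / complex_of_real (sqrt 2) else 0))"

text \<open>The operator <Phi_ij|_{IS} (rho_I (x) sigma_SR) |Phi_ij>_{IS} on R.\<close>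
definition bell_proj :: "cmat \<Rightarrow> nat \<Rightarrow> nat \<Rightarrow> cmat \<Rightarrow> cmat" where
  "bell_proj \<sigma> i j \<rho> = (\<lambda>r1 r2.
     \<Sum>a<2. \<Sum>s<2. \<Sum>a2<2. \<Sum>s2<2.
        cnj (bell i j a s) * (\<rho> a a2 * \<sigma> (2 * s + r1) (2 * s2 + r2)) * bell i j a2 s2)"

definition tele :: "cmat \<Rightarrow> cmat \<Rightarrow> cmat" where
  "tele \<sigma> \<rho> = (\<lambda>r r'. \<Sum>i<2. \<Sum>j<2.
      mmul 2 (mmul 2 (pauliXZ i j) (bell_proj \<sigma> i j \<rho>)) (adj (pauliXZ i j)) r r')"

definition tele_rot :: "cmat \<Rightarrow> cmat \<Rightarrow> cmat \<Rightarrow> cmat" where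
  "tele_rot \<sigma> U \<rho> = mmul 2 (mmul 2 (adj U) (tele \<sigma> (mmul 2 (mmul 2 U \<rho>) (adj U)))) U"

definition ket_bra :: "cvec \<Rightarrow> cmat" where
  "ket_bra \<psi> = (\<lambda>i j. \<psi> i * cnj (\<psi> j))"

definition expect :: "cvec \<Rightarrow> cmat \<Rightarrow> complex" where
  "expect \<psi> M = (\<Sum>i<2. \<Sum>j<2. cnj (\<psi> i) * M i j * \<psi> j)"

definition ket0 :: cvec where "ket0 = (\<lambda>i. if i = 0 then 1 else 0)"
definition ket1 :: cvec where "ket1 = (\<lambda>i. if i = 1 then 1 else 0)"

definition ket_plus :: "real \<Rightarrow> cvec" where
  "ket_plus \<theta> = (\<lambda>i. if i = 0 then 1 / complex_of_real (sqrt 2)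
                     else if i = 1 then cis \<theta> / complex_of_real (sqrt 2) else 0)"

definition Theta :: "real set" where
  "Theta = {real k * pi / 4 | k. k < (8::nat)}"

definition F_dummy :: "cmat \<Rightarrow> cmat \<Rightarrow> complex" where
  "F_dummy \<sigma> U = (expect ket0 (tele_rot \<sigma> U (ket_bra ket0))
                   + expect ket1 (tele_rot \<sigma> U (ket_bra ket1))) / 2"

definition F_trap :: "cmat \<Rightarrow> cmat \<Rightarrow> complex" where
  "F_trap \<sigma> U = (\<Sum>\<theta>\<in>Theta. expect (ket_plus \<theta>) (tele_rot \<sigma> U (ket_bra (ket_plus \<theta>)))) / 8"

text \<open>The Haar (uniform) measure on pure
  single-qubit states is the normalised surface measure on the Bloch sphere,
  i.e. the density sin t / (4 pi) on [0,pi] x [0,2pi].\<close>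
definition bloch_state :: "real \<Rightarrow> real \<Rightarrow> cvec" where
  "bloch_state t \<phi> = (\<lambda>i. if i = 0 then complex_of_real (cos (t/2))
                          else if i = 1 then cis \<phi> * complex_of_real (sin (t/2)) else 0)"

definition F_tel :: "cmat \<Rightarrow> complex" where
  "F_tel \<sigma> = (LINT p : {0..pi} \<times> {0..2*pi} | lborel.
      complex_of_real (sin (fst p) / (4 * pi)) *
      expect (bloch_state (fst p) (snd p)) (tele \<sigma> (ket_bra (bloch_state (fst p) (snd p)))))"

end

theory Submission
  imports Defs
begin

(* For a pure input x|0> + y|1>, the teleportation fidelity through Lambda_sigma is
   p a + q b + z c with a, b, c fixed sums of entries of sigma and the moments
   p = |x|^4 + |y|^4, q = 2 |x|^2 |y|^2, z = 2 Re ((conj x y)^2).  Under the Haar measure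
   these moments average to 2/3, 1/3 and 0.  Take U = [[c, -conj e s], [e s, c]] with
   e = exp (i pi/4) and real c, s such that c^2 + s^2 = 1 and c^2 s^2 = 1/6.  Both rotated
   dummy states then have moments exactly (2/3, 1/3, 0), the last one because e^2 = i,
   and the rotated trap state |+_theta> has moments 2/3 + sin (2 theta)/6,
   1/3 - sin (2 theta)/6 and (c^2 - s^2) cos (2 theta)/2, which average over Theta to
   (2/3, 1/3, 0) again. *)

lemma sum_lessThan_2: "(\<Sum>k<2. f k) = f 0 + f (1::nat)"
  by (simp add: numeral_2_eq_2)

lemma bell_proj_eq:
  "bell_proj \<sigma> i j \<rho> r r' = (\<Sum>a<2. \<Sum>s<2. \<Sum>a'<2. \<Sum>s'<2.
     cnj (pauliXZ i j a s) * pauliXZ i j a' s' * \<rho> a a' * \<sigma> (2 * s + r) (2 * s' + r')) / 2"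
proof -
  have bell: "bell i j a s = pauliXZ i j a s / complex_of_real (sqrt 2)" if "s < 2" for a s
    using that unfolding bell_def sum_lessThan_2 by (auto simp: less_2_cases_iff)
  have "cnj (complex_of_real (sqrt 2)) * complex_of_real (sqrt 2) = 2"
    by (simp flip: of_real_mult)
  then show ?thesis
    unfolding bell_proj_def sum_divide_distrib
    by (intro sum.cong refl) (simp add: bell field_simps)
qed

lemma tele_entries:
  "tele \<sigma> \<rho> 0 0 = \<rho> 0 0 * (\<sigma> 0 0 + \<sigma> 3 3) + \<rho> 1 1 * (\<sigma> 1 1 + \<sigma> 2 2)"
  "tele \<sigma> \<rho> 0 1 = \<rho> 0 1 * (\<sigma> 0 3 + \<sigma> 3 0) + \<rho> 1 0 * (\<sigma> 1 2 + \<sigma> 2 1)"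
  "tele \<sigma> \<rho> 1 0 = \<rho> 0 1 * (\<sigma> 1 2 + \<sigma> 2 1) + \<rho> 1 0 * (\<sigma> 0 3 + \<sigma> 3 0)"
  "tele \<sigma> \<rho> 1 1 = \<rho> 0 0 * (\<sigma> 1 1 + \<sigma> 2 2) + \<rho> 1 1 * (\<sigma> 0 0 + \<sigma> 3 3)"
  unfolding tele_def bell_proj_eq mmul_def adj_def sum_lessThan_2 pauliXZ_def
  by (simp_all add: pauliX_def pauliZ_def id_mat_def field_simps numeral_eq_Suc)

definition fidelity_comb :: "cmat \<Rightarrow> complex \<Rightarrow> complex \<Rightarrow> complex \<Rightarrow> complex" where
  "fidelity_comb \<sigma> p q z =
     p * (\<sigma> 0 0 + \<sigma> 3 3) + q * (\<sigma> 0 3 + \<sigma> 3 0 + \<sigma> 1 1 + \<sigma> 2 2) + z * (\<sigma> 1 2 + \<sigma> 2 1)"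

lemma fidelity_comb_sum:
  "(\<Sum>i\<in>I. fidelity_comb \<sigma> (p i) (q i) (z i)) = fidelity_comb \<sigma> (sum p I) (sum q I) (sum z I)"
  unfolding fidelity_comb_def by (simp add: sum.distrib sum_distrib_right)

lemma fidelity_comb_divide:
  "fidelity_comb \<sigma> p q z / d = fidelity_comb \<sigma> (p / d) (q / d) (z / d)"
  unfolding fidelity_comb_def by (simp add: add_divide_distrib)

lemma fidelity_comb_scale:
  "a * fidelity_comb \<sigma> p q z = fidelity_comb \<sigma> (a * p) (a * q) (a * z)"
  unfolding fidelity_comb_def by (simp add: algebra_simps)

definition pure_fidelity :: "cmat \<Rightarrow> complex \<Rightarrow> complex \<Rightarrow> complex" where
  "pure_fidelity \<sigma> x y = fidelity_comb \<sigma> ((x * cnj x)\<^sup>2 + (y * cnj y)\<^sup>2) (2 * (x * cnj x) * (y * cnj y))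
     ((cnj x * y)\<^sup>2 + (x * cnj y)\<^sup>2)"

lemma expect_tele_ket_bra: "expect \<psi> (tele \<sigma> (ket_bra \<psi>)) = pure_fidelity \<sigma> (\<psi> 0) (\<psi> 1)"
  unfolding expect_def sum_lessThan_2 tele_entries ket_bra_def pure_fidelity_def fidelity_comb_def
  by (simp add: algebra_simps power2_eq_square)

lemma expect_tele_rot_ket_bra:
  "expect \<psi> (tele_rot \<sigma> U (ket_bra \<psi>)) =
     pure_fidelity \<sigma> (U 0 0 * \<psi> 0 + U 0 1 * \<psi> 1) (U 1 0 * \<psi> 0 + U 1 1 * \<psi> 1)"
proof -
  let ?U\<psi> = "\<lambda>i. U i 0 * \<psi> 0 + U i 1 * \<psi> 1"
  have conj_input: "mmul 2 (mmul 2 U (ket_bra \<psi>)) (adj U) = ket_bra ?U\<psi>"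
    unfolding mmul_def sum_lessThan_2 ket_bra_def adj_def by (simp add: fun_eq_iff algebra_simps)
  have conj_output: "expect \<psi> (mmul 2 (mmul 2 (adj U) M) U) = expect ?U\<psi> M" for M
    unfolding mmul_def sum_lessThan_2 expect_def adj_def by (simp add: algebra_simps)
  show ?thesis
    unfolding tele_rot_def conj_input conj_output expect_tele_ket_bra by simp
qed

lemma pure_fidelity_swap: "pure_fidelity \<sigma> y x = pure_fidelity \<sigma> x y"
  unfolding pure_fidelity_def by (simp add: algebra_simps)

lemma pure_fidelity_phase:
  assumes "u * cnj u = 1"
  shows "pure_fidelity \<sigma> (of_real a) (u * of_real b) =
    fidelity_comb \<sigma> (of_real (a ^ 4 + b ^ 4)) (of_real (2 * a\<^sup>2 * b\<^sup>2)) (of_real (a\<^sup>2 * b\<^sup>2) * (u\<^sup>2 + (cnj u)\<^sup>2))"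
proof -
  have xx: "of_real a * cnj (of_real a) = (of_real (a\<^sup>2) :: complex)"
    by (simp add: power2_eq_square)
  have yy: "u * of_real b * cnj (u * of_real b) = of_real (b\<^sup>2)"
    using assms by (simp add: power2_eq_square algebra_simps)
  have z: "(cnj (of_real a) * (u * of_real b))\<^sup>2 + (of_real a * cnj (u * of_real b))\<^sup>2 =
      of_real (a\<^sup>2 * b\<^sup>2) * (u\<^sup>2 + (cnj u)\<^sup>2)"
    by (simp add: power_mult_distrib algebra_simps)
  show ?thesis
    unfolding pure_fidelity_def xx yy z by (simp add: power2_eq_square power4_eq_xxxx mult.assoc)
qed

lemma cis_mult_cnj: "cis t * cnj (cis t) = 1"
  by (simp add: cis_cnj cis_mult)

lemma cis_power2_add_cnj: "(cis t)\<^sup>2 + (cnj (cis t))\<^sup>2 = of_real (2 * cos (2 * t))"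
  unfolding cis_cnj Complex.DeMoivre by (simp add: complex_eq_iff)

lemma expect_tele_bloch_state:
  "expect (bloch_state t \<phi>) (tele \<sigma> (ket_bra (bloch_state t \<phi>))) =
    fidelity_comb \<sigma> (of_real (cos (t/2) ^ 4 + sin (t/2) ^ 4)) (of_real (2 * cos (t/2) ^ 2 * sin (t/2) ^ 2))
      (of_real (2 * cos (t/2) ^ 2 * sin (t/2) ^ 2 * cos (2 * \<phi>)))"
  using pure_fidelity_phase[OF cis_mult_cnj[of \<phi>], of \<sigma> "cos (t/2)" "sin (t/2)"]
  unfolding expect_tele_ket_bra cis_power2_add_cnj by (simp add: bloch_state_def mult_ac)

lemma integral_eq_antiderivative:
  fixes F f :: "real \<Rightarrow> real"
  assumes "a \<le> b" "\<And>x. (F has_real_derivative f x) (at x)"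
  shows "integral {a..b} f = F b - F a"
proof -
  have "(f has_integral (F b - F a)) {a..b}"
    using assms by (intro fundamental_theorem_of_calculus)
      (auto simp flip: has_real_derivative_iff_has_vector_derivative intro: has_field_derivative_at_within)
  then show ?thesis
    by (rule integral_unique)
qed

lemma set_integral_Icc_Times_mult:
  fixes f g :: "real \<Rightarrow> real"
  assumes f: "continuous_on {a..b} f" and g: "continuous_on {c..d} g"
  shows "(LINT p : {a..b} \<times> {c..d} | lborel. f (fst p) * g (snd p)) = integral {a..b} f * integral {c..d} g"
proof -
  have cont: "continuous_on ({a..b} \<times> {c..d}) (\<lambda>p. f (fst p) * g (snd p))"
    by (intro continuous_intros continuous_on_compose2[OF f] continuous_on_compose2[OF g]) auto
  then have "set_integrable lborel ({a..b} \<times> {c..d}) (\<lambda>p. f (fst p) * g (snd p))"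
    unfolding set_integrable_def by (intro borel_integrable_compact compact_Times compact_Icc)
  then have "(LINT p : {a..b} \<times> {c..d} | lborel. f (fst p) * g (snd p))
      = integral (cbox (a, c) (b, d)) (\<lambda>p. f (fst p) * g (snd p))"
    by (simp add: set_borel_integral_eq_integral(2) cbox_Pair_eq)
  also have "\<dots> = integral {a..b} (\<lambda>x. integral {c..d} (\<lambda>y. f x * g y))"
    using cont by (subst integral_prod_continuous) (simp_all add: cbox_Pair_eq)
  also have "\<dots> = integral {a..b} f * integral {c..d} g"
    by simp
  finally show ?thesis .
qed

lemma set_integral_Icc_Times_fst:
  fixes f :: "real \<Rightarrow> real"
  assumes "continuous_on {a..b} f" "c \<le> d"
  shows "(LINT p : {a..b} \<times> {c..d} | lborel. f (fst p)) = (d - c) * integral {a..b} f"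
  using set_integral_Icc_Times_mult[OF assms(1) continuous_on_const, of c d 1] assms(2) by simp

lemma set_integral_fidelity_comb:
  fixes p q z :: "'a::euclidean_space \<Rightarrow> real"
  assumes "compact S" "continuous_on S p" "continuous_on S q" "continuous_on S z"
  shows "(LINT x : S | lborel. fidelity_comb \<sigma> (of_real (p x)) (of_real (q x)) (of_real (z x))) =
    fidelity_comb \<sigma> (of_real (LINT x : S | lborel. p x)) (of_real (LINT x : S | lborel. q x))
      (of_real (LINT x : S | lborel. z x))"
proof -
  have integrable: "set_integrable lborel S (\<lambda>x. complex_of_real (f x) * k)" if "continuous_on S f" for f k
    unfolding set_integrable_def using assms(1) that by (intro borel_integrable_compact continuous_intros)
  show ?thesis
    unfolding fidelity_comb_def
    by (simp add: set_integral_add integrable assms set_integral_complex_of_real mult.commute[of _ "of_real _"])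
qed

lemma integral_sin_mult_half_angle_quartic:
  "integral {0..pi} (\<lambda>t. sin t * (cos (t/2) ^ 4 + sin (t/2) ^ 4)) = 4/3"
proof -
  have "integral {0..pi} (\<lambda>t. sin t * (cos (t/2) ^ 4 + sin (t/2) ^ 4))
      = 2 * (sin (pi/2) ^ 6 - cos (pi/2) ^ 6) / 3 - 2 * (sin (0/2) ^ 6 - cos (0/2) ^ 6) / 3"
  proof (rule integral_eq_antiderivative)
    fix x :: real
    have "sin x = 2 * sin (x/2) * cos (x/2)"
      using sin_double[of "x/2"] by simp
    then show "((\<lambda>t. 2 * (sin (t/2) ^ 6 - cos (t/2) ^ 6) / 3) has_real_derivative
        sin x * (cos (x/2) ^ 4 + sin (x/2) ^ 4)) (at x)"
      by (auto intro!: derivative_eq_intros simp: field_simps eval_nat_numeral)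
  qed simp
  then show ?thesis
    by simp
qed

lemma integral_sin_mult_half_angle_mixed:
  "integral {0..pi} (\<lambda>t. sin t * (2 * cos (t/2) ^ 2 * sin (t/2) ^ 2)) = 2/3"
proof -
  have "integral {0..pi} (\<lambda>t. sin t * (2 * cos (t/2) ^ 2 * sin (t/2) ^ 2))
      = (2 * sin (pi/2) ^ 4 - 4/3 * sin (pi/2) ^ 6) - (2 * sin (0/2) ^ 4 - 4/3 * sin (0/2) ^ 6)"
  proof (rule integral_eq_antiderivative)
    fix x :: real
    have "sin x = 2 * sin (x/2) * cos (x/2)"
      using sin_double[of "x/2"] by simp
    then show "((\<lambda>t. 2 * sin (t/2) ^ 4 - 4/3 * sin (t/2) ^ 6) has_real_derivative
        sin x * (2 * cos (x/2) ^ 2 * sin (x/2) ^ 2)) (at x)"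
      using sin_cos_squared_add[of "x/2"]
      by (auto intro!: derivative_eq_intros simp: field_simps eval_nat_numeral; algebra)
  qed simp
  then show ?thesis
    by simp
qed

lemma integral_cos_double_period: "integral {0..2*pi} (\<lambda>\<phi>. cos (2 * \<phi>)) = 0"
proof -
  have "integral {0..2*pi} (\<lambda>\<phi>. cos (2 * \<phi>)) = sin (2 * (2*pi)) / 2 - sin (2 * 0) / 2"
    by (rule integral_eq_antiderivative) (auto intro!: derivative_eq_intros)
  also have "sin (2 * (2*pi)) = sin (real 4 * pi)"
    by (simp add: mult.assoc)
  finally show ?thesis
    by (simp only: sin_npi) simp
qed

lemma F_tel_eq: "F_tel \<sigma> = fidelity_comb \<sigma> (2/3) (1/3) 0"
proof -
  let ?R = "{0..pi} \<times> {0..2*pi}"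
  define p where "p t = sin t * (cos (t/2) ^ 4 + sin (t/2) ^ 4) / (4*pi)" for t
  define q where "q t = sin t * (2 * cos (t/2) ^ 2 * sin (t/2) ^ 2) / (4*pi)" for t
  have cont: "continuous_on A p" "continuous_on A q" for A
    unfolding p_def q_def by (intro continuous_intros; simp)+
  have "0 \<le> 2 * pi"
    by simp
  have "F_tel \<sigma> = (LINT x : ?R | lborel.
      fidelity_comb \<sigma> (of_real (p (fst x))) (of_real (q (fst x))) (of_real (q (fst x) * cos (2 * snd x))))"
    unfolding F_tel_def expect_tele_bloch_state fidelity_comb_scale p_def q_def
    by (simp add: mult_ac)
  also have "\<dots> = fidelity_comb \<sigma> (of_real (LINT x : ?R | lborel. p (fst x)))
      (of_real (LINT x : ?R | lborel. q (fst x))) (of_real (LINT x : ?R | lborel. q (fst x) * cos (2 * snd x)))"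
    unfolding p_def q_def
    by (intro set_integral_fidelity_comb compact_Times compact_Icc continuous_intros) simp_all
  also have "(LINT x : ?R | lborel. p (fst x)) = 2/3"
    unfolding set_integral_Icc_Times_fst[OF cont(1) \<open>0 \<le> 2 * pi\<close>]
    unfolding p_def integral_divide integral_sin_mult_half_angle_quartic by simp
  also have "(LINT x : ?R | lborel. q (fst x)) = 1/3"
    unfolding set_integral_Icc_Times_fst[OF cont(2) \<open>0 \<le> 2 * pi\<close>]
    unfolding q_def integral_divide integral_sin_mult_half_angle_mixed by simp
  also have "(LINT x : ?R | lborel. q (fst x) * cos (2 * snd x)) = 0"
    using set_integral_Icc_Times_mult[OF cont(2), of 0 "2*pi" "\<lambda>\<phi>. cos (2 * \<phi>)"]
    by (simp add: continuous_intros integral_cos_double_period)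
  finally show ?thesis
    by simp
qed

definition su2_mat :: "complex \<Rightarrow> complex \<Rightarrow> cmat" where
  "su2_mat a b = (\<lambda>i j.
     if i = 0 \<and> j = 0 then a else if i = 0 \<and> j = 1 then - cnj b
     else if i = 1 \<and> j = 0 then b else if i = 1 \<and> j = 1 then cnj a else 0)"

lemma unitary_su2_mat:
  assumes "a * cnj a + b * cnj b = 1"
  shows "unitary 2 (su2_mat a b)"
  using assms unfolding unitary_def mat_eq_def mmul_def sum_lessThan_2 adj_def
  by (auto simp: su2_mat_def id_mat_def less_2_cases_iff algebra_simps)

lemma F_dummy_su2_mat:
  fixes c s :: real
  assumes cs: "c\<^sup>2 + s\<^sup>2 = 1" "c\<^sup>2 * s\<^sup>2 = 1/6"
  shows "F_dummy \<sigma> (su2_mat (of_real c) (cis (pi/4) * of_real s)) = fidelity_comb \<sigma> (2/3) (1/3) 0"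
proof -
  have phase: "pure_fidelity \<sigma> (of_real c) (u * of_real s) = fidelity_comb \<sigma> (2/3) (1/3) 0"
    if "u * cnj u = 1" "u\<^sup>2 + (cnj u)\<^sup>2 = 0" for u
  proof -
    have "c ^ 4 + s ^ 4 = (c\<^sup>2 + s\<^sup>2)\<^sup>2 - 2 * (c\<^sup>2 * s\<^sup>2)"
      by algebra
    then have moments: "c ^ 4 + s ^ 4 = 2/3" "2 * c\<^sup>2 * s\<^sup>2 = 1/3"
      using cs by simp_all
    show ?thesis
      unfolding pure_fidelity_phase[OF that(1)] that(2) moments by simp
  qed
  let ?e = "cis (pi/4)"
  have e: "?e * cnj ?e = 1" "(cnj ?e)\<^sup>2 + ?e\<^sup>2 = 0"
    by (simp_all add: cis_mult_cnj cis_cnj cis_mult power2_eq_square complex_eq_iff)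
  have "pure_fidelity \<sigma> (of_real c) (?e * of_real s) = fidelity_comb \<sigma> (2/3) (1/3) 0"
    using e by (intro phase) (simp_all add: add.commute)
  moreover have "pure_fidelity \<sigma> (of_real c) (- cnj ?e * of_real s) = fidelity_comb \<sigma> (2/3) (1/3) 0"
    using e by (intro phase) (simp_all add: mult.commute)
  ultimately show ?thesis
    unfolding F_dummy_def
    by (simp add: expect_tele_rot_ket_bra su2_mat_def ket0_def ket1_def pure_fidelity_swap)
qed

lemma Theta_eq_image: "Theta = (\<lambda>k. real k * pi / 4) ` {..<8}"
  unfolding Theta_def by auto

lemma inj_on_quarter_pi_multiples: "inj_on (\<lambda>k. real k * pi / 4) {..<8}"
  by (auto simp: inj_on_def)

lemma card_Theta: "card Theta = 8"
  unfolding Theta_eq_image by (simp add: card_image inj_on_quarter_pi_multiples)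

lemma sum_Theta_cis_double: "(\<Sum>\<theta>\<in>Theta. cis (2 * \<theta>)) = 0"
proof -
  have "cis (2 * (real k * pi / 4)) = cis (pi/2) ^ k" for k
    unfolding Complex.DeMoivre by (rule arg_cong[where f = cis]) simp
  then have "(\<Sum>\<theta>\<in>Theta. cis (2 * \<theta>)) = (\<Sum>k<8. \<i> ^ k)"
    unfolding Theta_eq_image sum.reindex[OF inj_on_quarter_pi_multiples] by simp
  also have "\<dots> = 0"
    by (simp add: sum_gp_strict)
  finally show ?thesis .
qed

lemma sum_Theta_sin_double: "(\<Sum>\<theta>\<in>Theta. sin (2 * \<theta>)) = 0"
  using arg_cong[OF sum_Theta_cis_double, of Im] by simp

lemma sum_Theta_cos_double: "(\<Sum>\<theta>\<in>Theta. cos (2 * \<theta>)) = 0"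
  using arg_cong[OF sum_Theta_cis_double, of Re] by simp

lemma ket_plus_rotated_populations:
  fixes c s \<theta> :: real
  assumes cs: "c\<^sup>2 + s\<^sup>2 = 1"
  defines "h \<equiv> 1 / complex_of_real (sqrt 2)" and "e \<equiv> cis (pi/4)" and "w \<equiv> cis \<theta>"
    and "T \<equiv> sqrt 2 * (cos \<theta> + sin \<theta>)"
  defines "x \<equiv> h * (of_real c - cnj e * w * of_real s)" and "y \<equiv> h * (e * of_real s + w * of_real c)"
  shows "x * cnj x = of_real ((1 - c * s * T) / 2)" and "y * cnj y = of_real ((1 + c * s * T) / 2)"
proof -
  have cs': "(of_real c)\<^sup>2 + (of_real s)\<^sup>2 = (1::complex)"
    using arg_cong[OF cs, of complex_of_real] by simp
  have h: "h * h = 1/2" "cnj h = h"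
    unfolding h_def by (simp_all flip: of_real_mult)
  have ew: "e * cnj w + cnj e * w = of_real T"
    unfolding e_def w_def T_def by (simp add: complex_eq_iff cis_cnj cos_45 sin_45 algebra_simps)
  have unit: "e * cnj e = 1" "w * cnj w = 1"
    unfolding e_def w_def by (rule cis_mult_cnj)+
  have "x * cnj x = h * h * (of_real (c\<^sup>2) + of_real (s\<^sup>2) * (e * cnj e) * (w * cnj w)
      - of_real (c * s) * (e * cnj w + cnj e * w))"
    unfolding x_def by (simp add: h(2) algebra_simps power2_eq_square)
  then show "x * cnj x = of_real ((1 - c * s * T) / 2)"
    unfolding unit ew h using cs' by (simp add: field_simps)
  have "y * cnj y = h * h * (of_real (s\<^sup>2) * (e * cnj e) + of_real (c\<^sup>2) * (w * cnj w)
      + of_real (c * s) * (e * cnj w + cnj e * w))"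
    unfolding y_def by (simp add: h(2) algebra_simps power2_eq_square)
  then show "y * cnj y = of_real ((1 + c * s * T) / 2)"
    unfolding unit ew h using cs' by (simp add: field_simps)
qed

lemma ket_plus_rotated_coherence:
  fixes c s \<theta> :: real
  assumes cs: "c\<^sup>2 + s\<^sup>2 = 1"
  defines "h \<equiv> 1 / complex_of_real (sqrt 2)" and "e \<equiv> cis (pi/4)" and "w \<equiv> cis \<theta>"
  defines "x \<equiv> h * (of_real c - cnj e * w * of_real s)" and "y \<equiv> h * (e * of_real s + w * of_real c)"
  shows "(cnj x * y)\<^sup>2 + (x * cnj y)\<^sup>2 = of_real ((c\<^sup>2 - s\<^sup>2) * cos (2*\<theta>) / 2)"
proof -
  have "cnj h = h"
    unfolding h_def by simp
  then have "cnj x * y = h * h * (of_real (c\<^sup>2) * w - e * e * of_real (s\<^sup>2) * cnj w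
      + of_real (c * s) * e * (1 - w * cnj w))"
    unfolding x_def y_def by (simp add: algebra_simps power2_eq_square)
  moreover have "h * h = 1/2" "e * e = \<i>"
    unfolding h_def e_def by (simp_all add: cis_mult flip: of_real_mult)
  ultimately have xy: "cnj x * y = (of_real (c\<^sup>2) * w - \<i> * of_real (s\<^sup>2) * cnj w) / 2"
    unfolding w_def cis_mult_cnj by simp
  have "x * cnj y = cnj (cnj x * y)"
    by simp
  then have yx: "x * cnj y = (of_real (c\<^sup>2) * cnj w + \<i> * of_real (s\<^sup>2) * w) / 2"
    unfolding xy by simp
  have "(cnj x * y)\<^sup>2 + (x * cnj y)\<^sup>2
      = (of_real (c\<^sup>2) * of_real (c\<^sup>2) - of_real (s\<^sup>2) * of_real (s\<^sup>2)) * (w\<^sup>2 + (cnj w)\<^sup>2) / 4"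
    unfolding xy yx by (simp add: power2_eq_square field_simps)
  also have "of_real (c\<^sup>2) * of_real (c\<^sup>2) - of_real (s\<^sup>2) * of_real (s\<^sup>2) = complex_of_real (c\<^sup>2 - s\<^sup>2)"
  proof -
    have "c\<^sup>2 * c\<^sup>2 - s\<^sup>2 * s\<^sup>2 = (c\<^sup>2 + s\<^sup>2) * (c\<^sup>2 - s\<^sup>2)"
      by algebra
    then have "c\<^sup>2 * c\<^sup>2 - s\<^sup>2 * s\<^sup>2 = c\<^sup>2 - s\<^sup>2"
      unfolding cs by simp
    then show ?thesis
      by (metis of_real_mult of_real_diff)
  qed
  also have "w\<^sup>2 + (cnj w)\<^sup>2 = of_real (2 * cos (2*\<theta>))"
    unfolding w_def by (rule cis_power2_add_cnj)
  finally show ?thesis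
    by simp
qed

lemma expect_tele_rot_ket_plus:
  fixes c s :: real
  assumes cs: "c\<^sup>2 + s\<^sup>2 = 1" "c\<^sup>2 * s\<^sup>2 = 1/6"
  shows "expect (ket_plus \<theta>) (tele_rot \<sigma> (su2_mat (of_real c) (cis (pi/4) * of_real s)) (ket_bra (ket_plus \<theta>)))
    = fidelity_comb \<sigma> (of_real (2/3 + sin (2*\<theta>) / 6)) (of_real (1/3 - sin (2*\<theta>) / 6))
        (of_real ((c\<^sup>2 - s\<^sup>2) * cos (2*\<theta>) / 2))"
proof -
  let ?h = "1 / complex_of_real (sqrt 2)" and ?e = "cis (pi/4)" and ?w = "cis \<theta>"
  define T where "T = sqrt 2 * (cos \<theta> + sin \<theta>)"
  have T2: "T\<^sup>2 = 2 + 2 * sin (2*\<theta>)"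
    unfolding T_def sin_double power_mult_distrib using sin_cos_squared_add[of \<theta>]
    by (simp add: power2_sum algebra_simps)
  have "expect (ket_plus \<theta>) (tele_rot \<sigma> (su2_mat (of_real c) (?e * of_real s)) (ket_bra (ket_plus \<theta>)))
      = pure_fidelity \<sigma> (?h * (of_real c - cnj ?e * ?w * of_real s)) (?h * (?e * of_real s + ?w * of_real c))"
    by (simp add: expect_tele_rot_ket_bra su2_mat_def ket_plus_def algebra_simps)
  also have "\<dots> = fidelity_comb \<sigma> (of_real (((1 - c * s * T) / 2)\<^sup>2 + ((1 + c * s * T) / 2)\<^sup>2))
      (of_real (2 * ((1 - c * s * T) / 2) * ((1 + c * s * T) / 2)))
      (of_real ((c\<^sup>2 - s\<^sup>2) * cos (2*\<theta>) / 2))"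
    unfolding pure_fidelity_def ket_plus_rotated_populations[OF cs(1)] ket_plus_rotated_coherence[OF cs(1)]
      T_def by simp
  also have "((1 - c * s * T) / 2)\<^sup>2 + ((1 + c * s * T) / 2)\<^sup>2 = 2/3 + sin (2*\<theta>) / 6"
  proof -
    have "((1 - c * s * T) / 2)\<^sup>2 + ((1 + c * s * T) / 2)\<^sup>2 = (1 + c\<^sup>2 * s\<^sup>2 * T\<^sup>2) / 2"
      by (simp add: field_simps power2_eq_square)
    then show ?thesis
      unfolding cs(2) T2 by (simp add: field_simps)
  qed
  also have "2 * ((1 - c * s * T) / 2) * ((1 + c * s * T) / 2) = 1/3 - sin (2*\<theta>) / 6"
  proof -
    have "2 * ((1 - c * s * T) / 2) * ((1 + c * s * T) / 2) = (1 - c\<^sup>2 * s\<^sup>2 * T\<^sup>2) / 2"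
      by (simp add: field_simps power2_eq_square)
    then show ?thesis
      unfolding cs(2) T2 by (simp add: field_simps)
  qed
  finally show ?thesis .
qed

lemma F_trap_su2_mat:
  fixes c s :: real
  assumes "c\<^sup>2 + s\<^sup>2 = 1" "c\<^sup>2 * s\<^sup>2 = 1/6"
  shows "F_trap \<sigma> (su2_mat (of_real c) (cis (pi/4) * of_real s)) = fidelity_comb \<sigma> (2/3) (1/3) 0"
proof -
  have sums: "(\<Sum>\<theta>\<in>Theta. 2/3 + sin (2*\<theta>) / 6) = 16/3" "(\<Sum>\<theta>\<in>Theta. 1/3 - sin (2*\<theta>) / 6) = 8/3"
    "(\<Sum>\<theta>\<in>Theta. (c\<^sup>2 - s\<^sup>2) * cos (2*\<theta>) / 2) = 0"
    by (simp_all add: sum.distrib sum_subtractf card_Theta sum_Theta_sin_double sum_Theta_cos_double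
        flip: sum_divide_distrib sum_distrib_left)
  show ?thesis
    unfolding F_trap_def expect_tele_rot_ket_plus[OF assms] fidelity_comb_sum fidelity_comb_divide
      of_real_sum[symmetric] sums
    by simp
qed

lemma ex_sum_squares_one_prod_squares_sixth: "\<exists>c s :: real. c\<^sup>2 + s\<^sup>2 = 1 \<and> c\<^sup>2 * s\<^sup>2 = 1/6"
proof (intro exI conjI)
  have "sqrt 3 \<le> 3"
    by (rule real_le_lsqrt) auto
  then have sq: "(sqrt ((3 + sqrt 3) / 6))\<^sup>2 = (3 + sqrt 3) / 6" "(sqrt ((3 - sqrt 3) / 6))\<^sup>2 = (3 - sqrt 3) / 6"
    by simp_all
  show "(sqrt ((3 + sqrt 3) / 6))\<^sup>2 + (sqrt ((3 - sqrt 3) / 6))\<^sup>2 = 1"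
    unfolding sq by (simp add: field_simps)
  show "(sqrt ((3 + sqrt 3) / 6))\<^sup>2 * (sqrt ((3 - sqrt 3) / 6))\<^sup>2 = 1/6"
    unfolding sq by (simp add: field_simps)
qed

theorem lemma4:
  fixes \<sigma> :: cmat
  assumes "density 4 \<sigma>"
  shows "\<exists>U. unitary 2 U \<and> F_dummy \<sigma> U = F_tel \<sigma> \<and> F_trap \<sigma> U = F_tel \<sigma>"
proof -
  obtain c s :: real where cs: "c\<^sup>2 + s\<^sup>2 = 1" "c\<^sup>2 * s\<^sup>2 = 1/6"
    using ex_sum_squares_one_prod_squares_sixth by blast
  let ?U = "su2_mat (of_real c) (cis (pi/4) * of_real s)"
  have "of_real c * cnj (of_real c) + cis (pi/4) * of_real s * cnj (cis (pi/4) * of_real s) = (1::complex)"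
    using arg_cong[OF cs(1), of complex_of_real] by (simp add: cis_cnj cis_mult power2_eq_square algebra_simps)
  then have "unitary 2 ?U"
    by (rule unitary_su2_mat)
  then show ?thesis
    using F_dummy_su2_mat[OF cs] F_trap_su2_mat[OF cs] F_tel_eq by metis
qed

end
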